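(* Consider $\mathbb{R}^4$ with coordinates $(u_1,u_2,p_{u_1},p_{u_2})$ and the Poisson bracket $$\{u_1,u_2\}=0,\quad \{p_{u_1},p_{u_2}\}=0,\quad \{u_i,p_{u_j}\}=\delta_{ij}\,u_i .$$ On the open set where $u_1u_2\neq0$, $u_1\neq u_2$ and $p_{u_1}u_2\neq p_{u_2}u_1$, define $$a=\frac{p_{u_1}^2}{u_1-u_2}+\frac{p_{u_2}^2}{u_2-u_1}-u_1^2-u_1u_2-u_2^2,\qquad b=\frac{u_2p_{u_1}^2}{u_2-u_1}+\frac{u_1p_{u_2}^2}{u_1-u_2}+(u_1+u_2)u_1u_2,$$ $$b_1=\frac{p_{u_1}u_2-p_{u_2}u_1}{u_1u_2(u_1-u_2)},\qquad b_0=-\frac{p_{u_1}u_2^2-p_{u_2}u_1^2}{u_1u_2(u_1-u_2)},$$ so that the parabola $y=x(b_1x+b_0)$ passes through $(u_1,p_{u_1})$ and $(u_2,p_{u_2})$. Then the quartic polynomial $x^3+ax+b-x^2(b_1x+b_0)^2$ is divisible by $(x-u_1)(x-u_2)$; let $v_1,v_2$ be the roots of the quadratic quotient. On an open subset $W$ where $v_1,v_2$ are real and distinct and can be chosen as smooth functions, define $$p_{v_j}=-v_j\,(b_1v_j+b_0),\qquad j=1,2,$$ and the map $\rho:(u_1,u_2,p_{u_1},p_{u_2})\mapsto(v_1,v_2,p_{v_1},p_{v_2})$. Then: (i) $\rho$ preserves the functions $a$ and $b$, i.e. $a\circ\rho=a$ and $b\circ\rho=b$ on $W$; (ii) $\rho$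 preserves the Poisson bracket above: $\{v_1,v_2\}=0$, $\{p_{v_1},p_{v_2}\}=0$, $\{v_i,p_{v_j}\}=\delta_{ij}\,v_i$.
   Context: For the bracket $\{u_i,p_{u_j}\}=\delta_{ij}u_i$ one has $\{f,g\}=\sum_{i=1}^2 u_i\left(\frac{\partial f}{\partial u_i}\frac{\partial g}{\partial p_{u_i}}-\frac{\partial f}{\partial p_{u_i}}\frac{\partial g}{\partial u_i}\right)$. The functions $a,b$ are in involution with respect to this bracket; they are the unique functions with $p_{u_i}^2=u_i^3+au_i+b$, $i=1,2$. *)

theory Defs
  imports "HOL-Analysis.Analysis" "HOL-Computational_Algebra.Polynomial"
begin

type_synonym R4 = "real \<times> real \<times> real \<times> real"

definition cu1 :: "R4 \<Rightarrow> real" where "cu1 z = fst z"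
definition cu2 :: "R4 \<Rightarrow> real" where "cu2 z = fst (snd z)"
definition cp1 :: "R4 \<Rightarrow> real" where "cp1 z = fst (snd (snd z))"
definition cp2 :: "R4 \<Rightarrow> real" where "cp2 z = snd (snd (snd z))"

definition pd :: "(R4 \<Rightarrow> real) \<Rightarrow> R4 \<Rightarrow> R4 \<Rightarrow> real" where
  "pd f e z = frechet_derivative f (at z) e"

definition du1 :: "(R4 \<Rightarrow> real) \<Rightarrow> R4 \<Rightarrow> real" where "du1 f z = pd f (1,0,0,0) z"
definition du2 :: "(R4 \<Rightarrow> real) \<Rightarrow> R4 \<Rightarrow> real" where "du2 f z = pd f (0,1,0,0) z"
definition dp1 :: "(R4 \<Rightarrow> real) \<Rightarrow> R4 \<Rightarrow> real" where "dp1 f z = pd f (0,0,1,0) z"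
definition dp2 :: "(R4 \<Rightarrow> real) \<Rightarrow> R4 \<Rightarrow> real" where "dp2 f z = pd f (0,0,0,1) z"

definition pb :: "(R4 \<Rightarrow> real) \<Rightarrow> (R4 \<Rightarrow> real) \<Rightarrow> R4 \<Rightarrow> real" where
  "pb f g z =
     cu1 z * (du1 f z * dp1 g z - dp1 f z * du1 g z)
   + cu2 z * (du2 f z * dp2 g z - dp2 f z * du2 g z)"

definition fa :: "R4 \<Rightarrow> real" where
  "fa z = (let u1 = cu1 z; u2 = cu2 z; p1 = cp1 z; p2 = cp2 z in
     p1^2 / (u1 - u2) + p2^2 / (u2 - u1) - u1^2 - u1*u2 - u2^2)"

definition fb :: "R4 \<Rightarrow> real" where
  "fb z = (let u1 = cu1 z; u2 = cu2 z; p1 = cp1 z; p2 = cp2 z in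
     u2 * p1^2 / (u2 - u1) + u1 * p2^2 / (u1 - u2) + (u1 + u2) * u1 * u2)"

definition fb1 :: "R4 \<Rightarrow> real" where
  "fb1 z = (let u1 = cu1 z; u2 = cu2 z; p1 = cp1 z; p2 = cp2 z in
     (p1 * u2 - p2 * u1) / (u1 * u2 * (u1 - u2)))"

definition fb0 :: "R4 \<Rightarrow> real" where
  "fb0 z = (let u1 = cu1 z; u2 = cu2 z; p1 = cp1 z; p2 = cp2 z in
     - ((p1 * u2^2 - p2 * u1^2) / (u1 * u2 * (u1 - u2))))"

definition dom4 :: "R4 set" where
  "dom4 = {z. cu1 z * cu2 z \<noteq> 0 \<and> cu1 z \<noteq> cu2 z \<and> cp1 z * cu2 z \<noteq> cp2 z * cu1 z}"

definition quartic :: "R4 \<Rightarrow> real poly" where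
  "quartic z = [:fb z, fa z, 0, 1:] - [:0, fb0 z, fb1 z:]^2"

definition divisor :: "R4 \<Rightarrow> real poly" where
  "divisor z = [:- cu1 z, 1:] * [:- cu2 z, 1:]"

definition quotient :: "R4 \<Rightarrow> real poly" where
  "quotient z = quartic z div divisor z"

definition pv :: "(R4 \<Rightarrow> real) \<Rightarrow> R4 \<Rightarrow> real" where
  "pv v z = - v z * (fb1 z * v z + fb0 z)"

definition rho :: "(R4 \<Rightarrow> real) \<Rightarrow> (R4 \<Rightarrow> real) \<Rightarrow> R4 \<Rightarrow> R4" where
  "rho v1 v2 z = (v1 z, v2 z, pv v1 z, pv v2 z)"

end

theory Submission
  imports Defs
begin

text \<open>
  On the domain the point is encoded by (u1, u2, b1, b0), since p_i = u_i (b1 u_i + b0). In these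
  terms the quartic is -b1^2 (x - u1) (x - u2) (x^2 - S x + P) with S = 1/b1^2 - 2 b0/b1 - u1 - u2
  and P = (b0/b1)^2 - (u1 + u2) S - u1 u2. Both (u_i, p_i) and (v_j, p_vj) lie on the intersection
  of the parabola y = x (b1 x + b0) with the cubic y^2 = x^3 + a x + b, and a, b are recovered from
  any two points of that cubic with distinct abscissae; this gives (i).

  For (ii), differentiating p_i = u_i (b1 u_i + b0) yields the gradients of b1, b0, hence the
  brackets of u1, u2, b1, b0, and from them {S, b1} = 0, {S, b0} = -1, {P, b1} = 1, {P, b0} = -S,
  {S, P} = 0. Since v1 + v2 = S and v1 v2 = P, the gradients of v1, v2 are determined by those of
  S and P, and the brackets of v_j and p_vj = -v_j (b1 v_j + b0) follow by bilinear algebra.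
\<close>

section \<open>Linear algebra\<close>

lemma sum_prod_of_distinct_roots:
  fixes S P x y :: "'a::idom"
  assumes "x \<noteq> y" and "x^2 - S * x + P = 0" and "y^2 - S * y + P = 0"
  shows "x + y = S \<and> x * y = P"
proof -
  have "(x - y) * (x + y - S) = 0"
    using assms(2,3) by algebra
  then have "x + y = S"
    using assms(1) by simp
  with assms(2) show ?thesis
    by algebra
qed

lemma vandermonde2_solve:
  fixes X Y R1 R2 :: "'a::real_vector"
  assumes "u1 \<noteq> u2" and "u1 *\<^sub>R X + Y = R1" and "u2 *\<^sub>R X + Y = R2"
  shows "X = (1 / (u1 - u2)) *\<^sub>R (R1 - R2)" and "Y = (1 / (u1 - u2)) *\<^sub>R (u1 *\<^sub>R R2 - u2 *\<^sub>R R1)"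
proof -
  have X: "R1 - R2 = (u1 - u2) *\<^sub>R X" and Y: "u1 *\<^sub>R R2 - u2 *\<^sub>R R1 = (u1 - u2) *\<^sub>R Y"
    unfolding assms(2,3)[symmetric] by (simp_all add: algebra_simps)
  show "X = (1 / (u1 - u2)) *\<^sub>R (R1 - R2)" and "Y = (1 / (u1 - u2)) *\<^sub>R (u1 *\<^sub>R R2 - u2 *\<^sub>R R1)"
    unfolding X Y using assms(1) by simp_all
qed

lemma alternating_bilinear_antisym:
  assumes "bilinear B" and "\<And>x. B x x = 0"
  shows "B y x = - B x y"
proof -
  have "B (x + y) (x + y) = B x y + B y x"
    by (simp only: bilinear_ladd[OF assms(1)] bilinear_radd[OF assms(1)]) (simp add: assms(2))
  then show ?thesis
    using assms(2)[of "x + y"] by (simp add: eq_neg_iff_add_eq_0 add.commute)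
qed

text \<open>In the application ga, gb, gS, gP, X, Y are the gradients of v1, v2, v1 + v2, v1 v2,
  b1, b0, and qa, qb those of p_v1, p_v2.\<close>
lemma brackets_of_roots:
  fixes B :: "'a::real_vector \<Rightarrow> 'a \<Rightarrow> real" and a b k l :: real
  assumes B: "bilinear B" "\<And>x. B x x = 0" and "a \<noteq> b"
    and sum: "ga + gb = gS" and prod: "a *\<^sub>R gb + b *\<^sub>R ga = gP"
    and "B gS gP = 0" and "B gS X = 0" and "B gS Y = -1"
    and "B gP X = 1" and "B gP Y = - (a + b)" and "B X Y = 0"
    and qa: "qa = - (2 * k * a + l) *\<^sub>R ga - a^2 *\<^sub>R X - a *\<^sub>R Y"
    and qb: "qb = - (2 * k * b + l) *\<^sub>R gb - b^2 *\<^sub>R X - b *\<^sub>R Y"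
  shows "B ga gb = 0" and "B qa qb = 0" and "B ga qa = a" and "B gb qb = b"
    and "B ga qb = 0" and "B gb qa = 0"
proof -
  note lin = bilinear_ladd[OF B(1)] bilinear_radd[OF B(1)] bilinear_lsub[OF B(1)]
    bilinear_rsub[OF B(1)] bilinear_lmul[OF B(1)] bilinear_rmul[OF B(1)]
    bilinear_lneg[OF B(1)] bilinear_rneg[OF B(1)] B(2)
  have flip: "B y x = - c" if "B x y = c" for x y c
    using that alternating_bilinear_antisym[OF B, of y x] by simp
  define d where "d = a - b"
  have "d \<noteq> 0" and a: "a = b + d"
    using assms(3) by (simp_all add: d_def)
  have "d * B ga gb = B gS gP"
    unfolding sum[symmetric] prod[symmetric] d_def
    by (simp add: lin alternating_bilinear_antisym[OF B, of ga gb] algebra_simps)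
  then show ga_gb: "B ga gb = 0"
    using \<open>d \<noteq> 0\<close> assms(6) by simp
  have "B ga X + B gb X = 0" and "b * B ga X + a * B gb X = 1"
    using assms(7,9) unfolding sum[symmetric] prod[symmetric] by (simp_all add: lin)
  then have "d * B ga X = - 1" and "d * B gb X = 1"
    unfolding d_def by algebra+
  then have ga_X: "B ga X = - 1 / d" "B gb X = 1 / d"
    using \<open>d \<noteq> 0\<close> by (simp_all add: field_simps)
  have "B ga Y + B gb Y = -1" and "b * B ga Y + a * B gb Y = - (a + b)"
    using assms(8,10) unfolding sum[symmetric] prod[symmetric] by (simp_all add: lin)
  then have "d * B ga Y = b" and "d * B gb Y = - a"
    unfolding d_def by algebra+
  then have ga_Y: "B ga Y = b / d" "B gb Y = - a / d"
    using \<open>d \<noteq> 0\<close> by (simp_all add: field_simps)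
  note known = ga_gb ga_X ga_Y assms(11) flip[OF ga_gb] flip[OF ga_X(1)] flip[OF ga_X(2)]
    flip[OF ga_Y(1)] flip[OF ga_Y(2)] flip[OF assms(11)]
  show "B qa qb = 0" "B ga qa = a" "B gb qb = b" "B ga qb = 0" "B gb qa = 0"
    unfolding qa qb using \<open>d \<noteq> 0\<close>
    by (simp_all add: lin known a field_simps power2_eq_square)
qed

section \<open>Gradients and the Poisson form\<close>

lemma coords_Pair [simp]:
  "cu1 (a, b, c, d) = a" "cu2 (a, b, c, d) = b" "cp1 (a, b, c, d) = c" "cp2 (a, b, c, d) = d"
  by (simp_all add: cu1_def cu2_def cp1_def cp2_def)

lemma R4_eq_coords: "z = (cu1 z, cu2 z, cp1 z, cp2 z)"
  by (simp add: cu1_def cu2_def cp1_def cp2_def)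

lemma continuous_on_coords [continuous_intros]:
  "continuous_on S cu1" "continuous_on S cu2" "continuous_on S cp1" "continuous_on S cp2"
  unfolding cu1_def[abs_def] cu2_def[abs_def] cp1_def[abs_def] cp2_def[abs_def]
  by (intro continuous_intros)+

lemma open_dom4: "open dom4"
  unfolding dom4_def
  by (intro open_Collect_conj open_Collect_neq continuous_intros)

definition grad :: "(R4 \<Rightarrow> real) \<Rightarrow> R4 \<Rightarrow> R4" where
  "grad f z = (du1 f z, du2 f z, dp1 f z, dp2 f z)"

lemma grad_eqI:
  assumes "GDERIV f z :> D"
  shows "grad f z = D"
proof -
  have "frechet_derivative f (at z) = (\<lambda>h. inner h D)"
    using assms unfolding gderiv_def by (rule frechet_derivative_at[symmetric])
  then show ?thesis
    by (cases D) (simp add: grad_def du1_def du2_def dp1_def dp2_def pd_def)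
qed

lemma GDERIV_grad:
  assumes "f differentiable (at z)"
  shows "GDERIV f z :> grad f z"
proof -
  let ?f' = "frechet_derivative f (at z)"
  have f': "(f has_derivative ?f') (at z)"
    using assms by (rule frechet_derivative_works[THEN iffD1])
  interpret linear ?f'
    using f' by (rule has_derivative_linear)
  have "?f' = (\<lambda>h. inner h (grad f z))"
  proof
    fix h
    show "?f' h = inner h (grad f z)"
    proof (cases h)
      case (fields a b c d)
      then have "?f' h = ?f' (a *\<^sub>R (1,0,0,0) + b *\<^sub>R (0,1,0,0) + c *\<^sub>R (0,0,1,0) + d *\<^sub>R (0,0,0,1))"
        by simp
      also have "\<dots> = a * ?f' (1,0,0,0) + b * ?f' (0,1,0,0) + c * ?f' (0,0,1,0) + d * ?f' (0,0,0,1)"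
        by (simp only: add scale real_scaleR_def)
      finally show ?thesis
        using fields by (simp add: grad_def du1_def du2_def dp1_def dp2_def pd_def)
    qed
  qed
  with f' show ?thesis
    unfolding gderiv_def by simp
qed

lemma GDERIV_transform_within_open:
  "GDERIV f z :> D \<Longrightarrow> open S \<Longrightarrow> z \<in> S \<Longrightarrow> (\<And>y. y \<in> S \<Longrightarrow> f y = g y) \<Longrightarrow> GDERIV g z :> D"
  unfolding gderiv_def by (rule has_derivative_transform_within_open)

lemma GDERIV_coords:
  "GDERIV cu1 z :> (1, 0, 0, 0)" "GDERIV cu2 z :> (0, 1, 0, 0)"
  "GDERIV cp1 z :> (0, 0, 1, 0)" "GDERIV cp2 z :> (0, 0, 0, 1)"
  unfolding gderiv_def cu1_def[abs_def] cu2_def[abs_def] cp1_def[abs_def] cp2_def[abs_def]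
  by (auto intro!: derivative_eq_intros)

lemma differentiable_coords [derivative_intros]:
  "cu1 differentiable (at z)" "cu2 differentiable (at z)"
  "cp1 differentiable (at z)" "cp2 differentiable (at z)"
  using GDERIV_coords unfolding gderiv_def differentiable_def by blast+

definition poisson_form :: "R4 \<Rightarrow> R4 \<Rightarrow> R4 \<Rightarrow> real" where
  "poisson_form z X Y =
     cu1 z * (cu1 X * cp1 Y - cp1 X * cu1 Y) + cu2 z * (cu2 X * cp2 Y - cp2 X * cu2 Y)"

lemma pb_eq_poisson_form: "pb f g z = poisson_form z (grad f z) (grad g z)"
  by (simp add: pb_def poisson_form_def grad_def)

lemma bilinear_poisson_form: "bilinear (poisson_form z)"
  unfolding bilinear_def poisson_form_def cu1_def cu2_def cp1_def cp2_def
  by (auto intro!: linearI simp: algebra_simps)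

lemma poisson_form_self: "poisson_form z X X = 0"
  by (simp add: poisson_form_def)

lemmas poisson_form_bilinear_simps =
  bilinear_ladd[OF bilinear_poisson_form] bilinear_radd[OF bilinear_poisson_form]
  bilinear_lsub[OF bilinear_poisson_form] bilinear_rsub[OF bilinear_poisson_form]
  bilinear_lmul[OF bilinear_poisson_form] bilinear_rmul[OF bilinear_poisson_form]
  poisson_form_self

lemma pb_coords: "pb cu1 cu2 z = 0"
  by (simp add: pb_eq_poisson_form grad_eqI[OF GDERIV_coords(1)] grad_eqI[OF GDERIV_coords(2)]
      poisson_form_def)

section \<open>The factorization of the quartic\<close>

lemma fa_fb_of_two_points_on_cubic:
  fixes x y q1 q2 a b :: real
  assumes "x \<noteq> y" and "q1^2 = x^3 + a * x + b" and "q2^2 = y^3 + a * y + b"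
  shows "fa (x, y, q1, q2) = a \<and> fb (x, y, q1, q2) = b"
proof -
  define d where "d = x - y"
  have "d \<noteq> 0" and y: "y = x - d"
    using assms(1) by (simp_all add: d_def)
  then show ?thesis
    unfolding fa_def fb_def Let_def coords_Pair assms(2,3) y
    by (simp add: field_simps) algebra
qed

lemma cp_eq_parabola:
  assumes "z \<in> dom4"
  shows "cp1 z = cu1 z * (fb1 z * cu1 z + fb0 z)" and "cp2 z = cu2 z * (fb1 z * cu2 z + fb0 z)"
proof -
  define D where "D = cu1 z * cu2 z * (cu1 z - cu2 z)"
  have "D \<noteq> 0"
    using assms by (simp add: dom4_def D_def)
  have b: "fb1 z = (cp1 z * cu2 z - cp2 z * cu1 z) / D"
    "fb0 z = - ((cp1 z * (cu2 z)^2 - cp2 z * (cu1 z)^2) / D)"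
    by (simp_all add: fb1_def fb0_def D_def Let_def)
  show "cp1 z = cu1 z * (fb1 z * cu1 z + fb0 z)" "cp2 z = cu2 z * (fb1 z * cu2 z + fb0 z)"
    unfolding b using \<open>D \<noteq> 0\<close>
    by (simp_all add: field_simps) (simp_all add: D_def algebra_simps power2_eq_square)
qed

lemma fb1_nonzero: "z \<in> dom4 \<Longrightarrow> fb1 z \<noteq> 0"
  by (auto simp: dom4_def fb1_def Let_def)

definition root_sum :: "R4 \<Rightarrow> real" where
  "root_sum z = 1 / (fb1 z)^2 - 2 * fb0 z / fb1 z - (cu1 z + cu2 z)"

definition root_prod :: "R4 \<Rightarrow> real" where
  "root_prod z = (fb0 z / fb1 z)^2 - (cu1 z + cu2 z) * root_sum z - cu1 z * cu2 z"

lemma quartic_factorization: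
  assumes "z \<in> dom4"
  shows "quartic z = smult (- ((fb1 z)^2)) (divisor z * [:root_prod z, - root_sum z, 1:])"
proof -
  define u1 u2 b1 b0 where "u1 = cu1 z" and "u2 = cu2 z" and "b1 = fb1 z" and "b0 = fb0 z"
  define S P where "S = root_sum z" and "P = root_prod z"
  define a b where "a = b1^2 * ((u1 + u2) * P + u1 * u2 * S)" and "b = - (b1^2 * u1 * u2 * P)"
  have "b1 \<noteq> 0"
    using fb1_nonzero[OF assms] by (simp add: b1_def)
  then have identity: "[:b, a, 0, 1:] - [:0, b0, b1:]^2
      = smult (- (b1^2)) ([:- u1, 1:] * [:- u2, 1:] * [:P, - S, 1:])"
    unfolding a_def b_def S_def P_def root_prod_def root_sum_def
    by (simp add: power2_eq_square field_simps u1_def u2_def b1_def b0_def)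
  have "poly ([:b, a, 0, 1:] - [:0, b0, b1:]^2) u1 = 0" "poly ([:b, a, 0, 1:] - [:0, b0, b1:]^2) u2 = 0"
    by (simp_all only: identity poly_smult poly_mult) simp_all
  then have "(cp1 z)^2 = u1^3 + a * u1 + b" and "(cp2 z)^2 = u2^3 + a * u2 + b"
    by (simp_all add: cp_eq_parabola[OF assms] u1_def u2_def b1_def b0_def
        algebra_simps power2_eq_square power3_eq_cube)
  moreover have "u1 \<noteq> u2"
    using assms by (simp add: dom4_def u1_def u2_def)
  ultimately have "fa z = a \<and> fb z = b"
    using fa_fb_of_two_points_on_cubic R4_eq_coords[of z] by (metis u1_def u2_def)
  then show ?thesis
    using identity by (simp add: quartic_def divisor_def u1_def u2_def b1_def b0_def S_def P_def)
qed

lemma quotient_eq: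
  assumes "z \<in> dom4"
  shows "quotient z = smult (- ((fb1 z)^2)) [:root_prod z, - root_sum z, 1:]"
proof -
  have "divisor z \<noteq> 0"
    by (simp add: divisor_def)
  then show ?thesis
    unfolding quotient_def quartic_factorization[OF assms] mult_smult_right[symmetric]
    by (rule nonzero_mult_div_cancel_left)
qed

lemma roots_of_quotient:
  assumes "z \<in> dom4" and "x \<noteq> y" and "poly (quotient z) x = 0" and "poly (quotient z) y = 0"
  shows "x + y = root_sum z \<and> x * y = root_prod z"
proof (rule sum_prod_of_distinct_roots[OF assms(2)])
  have "poly (quotient z) t = - ((fb1 z)^2) * (t^2 - root_sum z * t + root_prod z)" for t
    by (simp add: quotient_eq[OF assms(1)] algebra_simps power2_eq_square)
  then show "x^2 - root_sum z * x + root_prod z = 0" "y^2 - root_sum z * y + root_prod z = 0"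
    using assms(3,4) fb1_nonzero[OF assms(1)] by simp_all
qed

lemma pv_on_cubic:
  assumes "z \<in> dom4" and "poly (quotient z) (v z) = 0"
  shows "(pv v z)^2 = (v z)^3 + fa z * v z + fb z"
proof -
  have "quartic z = divisor z * quotient z"
    by (simp only: quotient_eq[OF assms(1)] quartic_factorization[OF assms(1)] mult_smult_right)
  then have "poly (quartic z) (v z) = 0"
    using assms(2) by simp
  then show ?thesis
    by (simp add: quartic_def pv_def algebra_simps power2_eq_square power3_eq_cube)
qed

section \<open>Poisson brackets\<close>

lemma differentiable_parabola_coeffs:
  assumes "z \<in> dom4"
  shows "fb1 differentiable (at z)" and "fb0 differentiable (at z)"
  using assms unfolding fb1_def[abs_def] fb0_def[abs_def] Let_def dom4_def
  by (auto intro!: derivative_intros)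

lemma differential_parabola_through_points:
  assumes "z \<in> dom4"
  shows "(cu1 z)^2 *\<^sub>R grad fb1 z + cu1 z *\<^sub>R grad fb0 z + (2 * fb1 z * cu1 z + fb0 z) *\<^sub>R (1, 0, 0, 0)
      = (0, 0, 1, 0)"
    and "(cu2 z)^2 *\<^sub>R grad fb1 z + cu2 z *\<^sub>R grad fb0 z + (2 * fb1 z * cu2 z + fb0 z) *\<^sub>R (0, 1, 0, 0)
      = (0, 0, 0, 1)"
proof -
  note d = differentiable_parabola_coeffs[OF assms]
  have chain: "GDERIV (\<lambda>y. u y * (fb1 y * u y + fb0 y)) z
      :> (u z)^2 *\<^sub>R grad fb1 z + u z *\<^sub>R grad fb0 z + (2 * fb1 z * u z + fb0 z) *\<^sub>R E"
    if "GDERIV u z :> E" for u E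
    using GDERIV_mult[OF that GDERIV_add[OF GDERIV_mult[OF GDERIV_grad[OF d(1)] that] GDERIV_grad[OF d(2)]]]
    by (rule GDERIV_subst) (simp add: algebra_simps power2_eq_square, simp flip: scaleR_add_left)
  have "GDERIV cp1 z :> (cu1 z)^2 *\<^sub>R grad fb1 z + cu1 z *\<^sub>R grad fb0 z
      + (2 * fb1 z * cu1 z + fb0 z) *\<^sub>R (1, 0, 0, 0)"
    by (rule GDERIV_transform_within_open[OF chain[OF GDERIV_coords(1)] open_dom4 assms])
      (simp add: cp_eq_parabola)
  then show "(cu1 z)^2 *\<^sub>R grad fb1 z + cu1 z *\<^sub>R grad fb0 z
      + (2 * fb1 z * cu1 z + fb0 z) *\<^sub>R (1, 0, 0, 0) = (0, 0, 1, 0)"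
    using grad_eqI[OF GDERIV_coords(3)] grad_eqI by metis
  have "GDERIV cp2 z :> (cu2 z)^2 *\<^sub>R grad fb1 z + cu2 z *\<^sub>R grad fb0 z
      + (2 * fb1 z * cu2 z + fb0 z) *\<^sub>R (0, 1, 0, 0)"
    by (rule GDERIV_transform_within_open[OF chain[OF GDERIV_coords(2)] open_dom4 assms])
      (simp add: cp_eq_parabola)
  then show "(cu2 z)^2 *\<^sub>R grad fb1 z + cu2 z *\<^sub>R grad fb0 z
      + (2 * fb1 z * cu2 z + fb0 z) *\<^sub>R (0, 1, 0, 0) = (0, 0, 0, 1)"
    using grad_eqI[OF GDERIV_coords(4)] grad_eqI by metis
qed

lemma grad_parabola_coeffs:
  assumes "z \<in> dom4"
  defines "w1 \<equiv> (1 / cu1 z) *\<^sub>R ((0, 0, 1, 0) - (2 * fb1 z * cu1 z + fb0 z) *\<^sub>R (1, 0, 0, 0))"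
    and "w2 \<equiv> (1 / cu2 z) *\<^sub>R ((0, 0, 0, 1) - (2 * fb1 z * cu2 z + fb0 z) *\<^sub>R (0, 1, 0, 0))"
  shows "grad fb1 z = (1 / (cu1 z - cu2 z)) *\<^sub>R (w1 - w2)"
    and "grad fb0 z = (1 / (cu1 z - cu2 z)) *\<^sub>R (cu1 z *\<^sub>R w2 - cu2 z *\<^sub>R w1)"
proof -
  have nz: "cu1 z \<noteq> 0" "cu2 z \<noteq> 0" "cu1 z \<noteq> cu2 z"
    using assms(1) by (auto simp: dom4_def)
  have divide_out: "u *\<^sub>R X + Y = (1 / u) *\<^sub>R (e - c)"
    if "u \<noteq> 0" and "u^2 *\<^sub>R X + u *\<^sub>R Y + c = e" for u :: real and X Y c e :: R4
    unfolding that(2)[symmetric] using that(1)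
    by (simp add: algebra_simps power2_eq_square)
  show "grad fb1 z = (1 / (cu1 z - cu2 z)) *\<^sub>R (w1 - w2)"
    and "grad fb0 z = (1 / (cu1 z - cu2 z)) *\<^sub>R (cu1 z *\<^sub>R w2 - cu2 z *\<^sub>R w1)"
    using vandermonde2_solve[OF nz(3)
        divide_out[OF nz(1) differential_parabola_through_points(1)[OF assms(1)]]
        divide_out[OF nz(2) differential_parabola_through_points(2)[OF assms(1)]]]
    unfolding w1_def w2_def by simp_all
qed

lemma poisson_brackets_parabola_coeffs:
  assumes "z \<in> dom4"
  shows "pb cu1 fb1 z = 1 / (cu1 z - cu2 z)" and "pb cu2 fb1 z = - 1 / (cu1 z - cu2 z)"
    and "pb cu1 fb0 z = - cu2 z / (cu1 z - cu2 z)" and "pb cu2 fb0 z = cu1 z / (cu1 z - cu2 z)"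
    and "pb fb1 fb0 z = 0"
proof -
  have "cu1 z \<noteq> 0" "cu2 z \<noteq> 0" "cu1 z - cu2 z \<noteq> 0"
    using assms by (auto simp: dom4_def)
  then show "pb cu1 fb1 z = 1 / (cu1 z - cu2 z)" "pb cu2 fb1 z = - 1 / (cu1 z - cu2 z)"
    "pb cu1 fb0 z = - cu2 z / (cu1 z - cu2 z)" "pb cu2 fb0 z = cu1 z / (cu1 z - cu2 z)"
    "pb fb1 fb0 z = 0"
    unfolding pb_eq_poisson_form grad_parabola_coeffs[OF assms] grad_eqI[OF GDERIV_coords(1)]
      grad_eqI[OF GDERIV_coords(2)] poisson_form_def
    by (simp_all add: field_simps)
qed

lemma GDERIV_root_sum:
  assumes "z \<in> dom4"
  shows "GDERIV root_sum z :> (2 * fb0 z / (fb1 z)^2 - 2 / (fb1 z)^3) *\<^sub>R grad fb1 z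
      - (2 / fb1 z) *\<^sub>R grad fb0 z - grad cu1 z - grad cu2 z"
  using GDERIV_grad[OF differentiable_parabola_coeffs(1)[OF assms]]
    GDERIV_grad[OF differentiable_parabola_coeffs(2)[OF assms]]
    GDERIV_grad[OF differentiable_coords(1)[of z]] GDERIV_grad[OF differentiable_coords(2)[of z]]
    fb1_nonzero[OF assms]
  unfolding gderiv_def root_sum_def[abs_def]
  by (auto intro!: derivative_eq_intros
      simp: fun_eq_iff inner_diff_right inner_add_right field_simps power2_eq_square power3_eq_cube)

lemma GDERIV_root_prod:
  assumes "z \<in> dom4"
  shows "GDERIV root_prod z :> (2 * fb0 z / (fb1 z)^2) *\<^sub>R grad fb0 z
      - (2 * (fb0 z)^2 / (fb1 z)^3) *\<^sub>R grad fb1 z - root_sum z *\<^sub>R (grad cu1 z + grad cu2 z)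
      - (cu1 z + cu2 z) *\<^sub>R grad root_sum z - cu2 z *\<^sub>R grad cu1 z - cu1 z *\<^sub>R grad cu2 z"
  using GDERIV_grad[OF differentiable_parabola_coeffs(1)[OF assms]]
    GDERIV_grad[OF differentiable_parabola_coeffs(2)[OF assms]]
    GDERIV_grad[OF differentiable_coords(1)[of z]] GDERIV_grad[OF differentiable_coords(2)[of z]]
    GDERIV_root_sum[OF assms, folded grad_eqI[OF GDERIV_root_sum[OF assms]]] fb1_nonzero[OF assms]
  unfolding gderiv_def root_prod_def[abs_def]
  by (auto intro!: derivative_eq_intros
      simp: fun_eq_iff inner_diff_right inner_add_right field_simps power2_eq_square power3_eq_cube)

lemma poisson_brackets_root_sum_prod:
  assumes "z \<in> dom4"
  shows "pb root_sum fb1 z = 0" and "pb root_sum fb0 z = -1"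
    and "pb root_prod fb1 z = 1" and "pb root_prod fb0 z = - root_sum z"
    and "pb root_sum root_prod z = 0"
proof -
  define d where "d = cu1 z - cu2 z"
  have "d \<noteq> 0" and u1: "cu1 z = cu2 z + d"
    using assms by (auto simp: dom4_def d_def)
  have flip: "poisson_form z Y X = - c" if "poisson_form z X Y = c" for X Y c
    using that alternating_bilinear_antisym[OF bilinear_poisson_form[of z] poisson_form_self, of X Y]
    by simp
  note basic = poisson_brackets_parabola_coeffs[OF assms] pb_coords
  note brackets = basic[unfolded pb_eq_poisson_form d_def[symmetric]]
    basic[unfolded pb_eq_poisson_form d_def[symmetric], THEN flip]
  note grads = grad_eqI[OF GDERIV_root_prod[OF assms]] grad_eqI[OF GDERIV_root_sum[OF assms]]
  show S_b1: "pb root_sum fb1 z = 0" and S_b0: "pb root_sum fb0 z = -1"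
    and "pb root_prod fb1 z = 1" and "pb root_prod fb0 z = - root_sum z"
    unfolding pb_eq_poisson_form grads using \<open>d \<noteq> 0\<close> fb1_nonzero[OF assms]
    by (simp_all add: poisson_form_bilinear_simps brackets field_simps root_sum_def u1)
  define c where "c = 2 * fb0 z / (fb1 z)^2 - 2 / (fb1 z)^3"
  have S_u1: "pb root_sum cu1 z = - (c + 2 * cu2 z / fb1 z) / d"
    and S_u2: "pb root_sum cu2 z = (c + 2 * cu1 z / fb1 z) / d"
    unfolding pb_eq_poisson_form grads(2) c_def using \<open>d \<noteq> 0\<close>
    by (simp_all add: poisson_form_bilinear_simps brackets field_simps)
  show "pb root_sum root_prod z = 0"
    using \<open>d \<noteq> 0\<close> fb1_nonzero[OF assms]
    unfolding pb_eq_poisson_form grads(1)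
    by (simp add: poisson_form_bilinear_simps S_b1 S_b0 S_u1 S_u2 flip: pb_eq_poisson_form)
      (simp add: c_def root_sum_def u1 field_simps, algebra)
qed

lemma GDERIV_pv:
  assumes "z \<in> dom4" and "GDERIV v z :> D"
  shows "GDERIV (pv v) z :> - (2 * fb1 z * v z + fb0 z) *\<^sub>R D - (v z)^2 *\<^sub>R grad fb1 z
      - v z *\<^sub>R grad fb0 z"
proof -
  note d = differentiable_parabola_coeffs[OF assms(1)]
  have "pv v = (\<lambda>y. - v y * (fb1 y * v y + fb0 y))"
    by (simp add: pv_def fun_eq_iff)
  show ?thesis
    unfolding \<open>pv v = _\<close>
    using GDERIV_mult[OF GDERIV_minus[OF assms(2)]
        GDERIV_add[OF GDERIV_mult[OF GDERIV_grad[OF d(1)] assms(2)] GDERIV_grad[OF d(2)]]]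
    by (rule GDERIV_subst) (simp add: algebra_simps power2_eq_square, simp flip: scaleR_add_left)
qed

lemma poisson_brackets_of_roots:
  assumes "open U" and "U \<subseteq> dom4" and "z \<in> U"
    and "v1 differentiable (at z)" and "v2 differentiable (at z)" and "v1 z \<noteq> v2 z"
    and vieta: "\<And>y. y \<in> U \<Longrightarrow> v1 y + v2 y = root_sum y \<and> v1 y * v2 y = root_prod y"
  shows "pb v1 v2 z = 0 \<and> pb (pv v1) (pv v2) z = 0 \<and> pb v1 (pv v1) z = v1 z
    \<and> pb v2 (pv v2) z = v2 z \<and> pb v1 (pv v2) z = 0 \<and> pb v2 (pv v1) z = 0"
proof -
  have z: "z \<in> dom4"
    using assms(2,3) by blast
  note g1 = GDERIV_grad[OF assms(4)] and g2 = GDERIV_grad[OF assms(5)]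
  have "grad root_sum z = grad v1 z + grad v2 z"
    using GDERIV_transform_within_open[OF GDERIV_add[OF g1 g2] assms(1,3)] vieta
    by (simp add: grad_eqI)
  moreover have "grad root_prod z = v1 z *\<^sub>R grad v2 z + v2 z *\<^sub>R grad v1 z"
    using GDERIV_transform_within_open[OF GDERIV_mult[OF g1 g2] assms(1,3)] vieta
    by (simp add: grad_eqI)
  moreover have "root_sum z = v1 z + v2 z"
    using vieta[OF assms(3)] by simp
  ultimately show ?thesis
    using brackets_of_roots[OF bilinear_poisson_form poisson_form_self assms(6) _ _ _ _ _ _ _
        poisson_brackets_parabola_coeffs(5)[OF z, unfolded pb_eq_poisson_form]
        grad_eqI[OF GDERIV_pv[OF z g1]] grad_eqI[OF GDERIV_pv[OF z g2]]]
      poisson_brackets_root_sum_prod[OF z, unfolded pb_eq_poisson_form]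
    unfolding pb_eq_poisson_form by simp
qed

theorem proposition4:
  fixes W :: "R4 set" and v1 v2 :: "R4 \<Rightarrow> real"
  assumes "open W" and "W \<subseteq> dom4"
    and "\<And>z. z \<in> W \<Longrightarrow> v1 differentiable (at z)"
    and "\<And>z. z \<in> W \<Longrightarrow> v2 differentiable (at z)"
    and "\<And>z. z \<in> W \<Longrightarrow> poly (quotient z) (v1 z) = 0"
    and "\<And>z. z \<in> W \<Longrightarrow> poly (quotient z) (v2 z) = 0"
    and "\<And>z. z \<in> W \<Longrightarrow> v1 z \<noteq> v2 z"
  shows "(\<forall>z\<in>dom4. divisor z dvd quartic z)
    \<and> (\<forall>z\<in>W. fa (rho v1 v2 z) = fa z \<and> fb (rho v1 v2 z) = fb z)
    \<and> (\<forall>z\<in>W. pb v1 v2 z = 0 \<and> pb (pv v1) (pv v2) z = 0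
         \<and> pb v1 (pv v1) z = v1 z \<and> pb v2 (pv v2) z = v2 z
         \<and> pb v1 (pv v2) z = 0 \<and> pb v2 (pv v1) z = 0)"
proof -
  have "divisor z dvd quartic z" if "z \<in> dom4" for z
    unfolding quartic_factorization[OF that] by (intro dvd_smult dvd_triv_left)
  moreover have "fa (rho v1 v2 z) = fa z \<and> fb (rho v1 v2 z) = fb z" if z: "z \<in> W" for z
  proof -
    have "z \<in> dom4"
      using assms(2) z by blast
    then show ?thesis
      using fa_fb_of_two_points_on_cubic[OF assms(7)[OF z]
          pv_on_cubic[of z v1, OF _ assms(5)[OF z]] pv_on_cubic[of z v2, OF _ assms(6)[OF z]]]
      by (simp add: rho_def)
  qed
  moreover have "pb v1 v2 z = 0 \<and> pb (pv v1) (pv v2) z = 0 \<and> pb v1 (pv v1) z = v1 z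
      \<and> pb v2 (pv v2) z = v2 z \<and> pb v1 (pv v2) z = 0 \<and> pb v2 (pv v1) z = 0" if "z \<in> W" for z
    using poisson_brackets_of_roots[OF assms(1,2) that assms(3,4,7)[OF that]]
      roots_of_quotient assms(2,5,6,7) by blast
  ultimately show ?thesis
    by blast
qed

end
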